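(* Fix $o\in\mathbb{H}^3$ and let $\mathcal{M}$ be an almost semidefinite, closed, connected, two-dimensional submanifold of $\mathcal{L}$. (a) For every $\ell=[\gamma]\in\mathcal{M}$ ($\gamma$ unit speed), the restriction of $\psi_\gamma$ to $T_\gamma^{-1}(T_\ell\mathcal{M})$ is surjective onto $\dot\gamma(0)^\perp$. (b) Every critical point $\ell$ of $D|_{\mathcal{M}}$ satisfies $D(\ell)=0$ and is a strict local minimum of $D|_{\mathcal{M}}$. Moreover, $D(\ell_n)\to\infty$ for every sequence $(\ell_n)$ in $\mathcal{M}$ without cluster points (in $\mathcal{M}$).
   Context: $\mathbb{H}^3$ is the oriented three-dimensional hyperbolic space of curvature $-1$ with cross product $\times$. $\mathcal{L}$ is the smooth 4-manifold of complete oriented geodesics of $\mathbb{H}^3$. For a unit speed geodesic $\gamma$, $\mathcal{J}_\gamma$ is the space of Jacobi fields along $\gamma$ orthogonal to $\dot\gamma$ and $T_\gamma:\mathcal{J}_\gamma\to T_{[\gamma]}\mathcal{L}$, $T_\gamma(J)=\frac{d}{dt}\big|_0[\gamma_t]$ for a variation by unit speed geodesics with variation field $J$, is a linear isomorphism. The metrics $g_\times,g_K$ on $\mathcal{L}$ have square norms $\|T_\gamma(J)\|_\times=\langle\dot\gamma\times J,J'\rangle$, $\|T_\gamma(J)\|_K=|J|^2-|J'|^2$. A submanifold $\mathcal{M}\subset\mathcal{L}$ is almost semidefinite if $\|X\|_\times=0$ for $X\in T\mathcal{M}$ implies $\|X\|_K\ge0$. $\psi_\gamma:\mathcal{J}_\gamma\to\dot\gamma(0)^\perp$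 is $\psi_\gamma(J)=J(0)$. $D:\mathcal{L}\to\mathbb{R}$ assigns to an oriented geodesic the square of its distance to $o$ (a smooth function). *)

theory Defs
  imports "HOL-Analysis.Analysis"
begin

fun Ck_on :: "nat \<Rightarrow> 'a::euclidean_space set \<Rightarrow> ('a \<Rightarrow> 'b::euclidean_space) \<Rightarrow> bool" where
  "Ck_on 0 S f = continuous_on S f"
| "Ck_on (Suc k) S f = (\<exists>f'. (\<forall>x\<in>S. (f has_derivative f' x) (at x)) \<and>
                            (\<forall>v. Ck_on k S (\<lambda>x. f' x v)))"

definition smooth_on :: "'a::euclidean_space set \<Rightarrow> ('a \<Rightarrow> 'b::euclidean_space) \<Rightarrow> bool" where
  "smooth_on S f \<longleftrightarrow> (\<forall>k. Ck_on k S f)"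

section \<open>Hyperboloid model of H^3 in Minkowski space R^(1,3); coordinate 0 is time\<close>

definition mink :: "real^4 \<Rightarrow> real^4 \<Rightarrow> real" where
  "mink x y = (\<Sum>i\<in>UNIV. (if i = 0 then -1 else 1) * x$i * y$i)"

definition hyp :: "(real^4) set" where
  "hyp = {x. mink x x = -1 \<and> x$0 > 0}"

definition hdist :: "real^4 \<Rightarrow> real^4 \<Rightarrow> real" where
  "hdist x y = arcosh (- mink x y)"

definition unit_tangent :: "real^4 \<Rightarrow> real^4 \<Rightarrow> bool" where
  "unit_tangent p v \<longleftrightarrow> p \<in> hyp \<and> mink p v = 0 \<and> mink v v = 1"

definition geod :: "real^4 \<Rightarrow> real^4 \<Rightarrow> real \<Rightarrow> real^4" where
  "geod p v t = cosh t *\<^sub>R p + sinh t *\<^sub>R v"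

text \<open>Oriented geodesic identified with its (forward, backward) ideal endpoints,
  normalised null vectors with time coordinate 1.\<close>
definition endpoints :: "(real^4) \<times> (real^4) \<Rightarrow> (real^4) \<times> (real^4)" where
  "endpoints z = (inverse (fst z $ 0 + snd z $ 0) *\<^sub>R (fst z + snd z),
                  inverse (fst z $ 0 - snd z $ 0) *\<^sub>R (fst z - snd z))"

definition Lspace :: "((real^4) \<times> (real^4)) set" where
  "Lspace = endpoints ` {(p, v). unit_tangent p v}"

definition normal_vec :: "real^4 \<Rightarrow> real^4 \<Rightarrow> real^4 \<Rightarrow> bool" where
  "normal_vec p v w \<longleftrightarrow> mink w p = 0 \<and> mink w v = 0"

text \<open>A Jacobi field J orthogonal to the geodesic is represented by (A,B) = (J(0), J'(0)),
  A, B normal.  T_gamma(J) = derivative of [gamma_s] = derivative of the endpoint map.\<close>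
definition Tgeo :: "real^4 \<Rightarrow> real^4 \<Rightarrow> real^4 \<Rightarrow> real^4 \<Rightarrow> (real^4) \<times> (real^4)" where
  "Tgeo p v A B = frechet_derivative endpoints (at (p, v)) (A, B)"

definition rows4 :: "real^4 \<Rightarrow> real^4 \<Rightarrow> real^4 \<Rightarrow> real^4 \<Rightarrow> real^4^4" where
  "rows4 a b c d = (\<chi> i. if i = 0 then a else if i = 1 then b else if i = 2 then c else d)"

text \<open>Cross product on T_p H^3: mink (crossH p X Y) W = det(p,X,Y,W).\<close>
definition crossH :: "real^4 \<Rightarrow> real^4 \<Rightarrow> real^4 \<Rightarrow> real^4" where
  "crossH p X Y = (\<chi> i. (if i = 0 then -1 else 1) * det (rows4 p X Y (axis i 1)))"

text \<open>Square norms at t = 0: <gamma' x J, J'> and |J|^2 - |J'|^2.\<close>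
definition normX :: "real^4 \<Rightarrow> real^4 \<Rightarrow> real^4 \<Rightarrow> real^4 \<Rightarrow> real" where
  "normX p v A B = mink (crossH p v A) B"

definition normK :: "real^4 \<Rightarrow> real^4 \<Rightarrow> real^4 \<Rightarrow> real^4 \<Rightarrow> real" where
  "normK p v A B = mink A A - mink B B"

definition tangent_space :: "'a::real_normed_vector set \<Rightarrow> 'a \<Rightarrow> 'a set" where
  "tangent_space M x = {w. \<exists>c :: real \<Rightarrow> 'a. (\<forall>t. c t \<in> M) \<and> c 0 = x \<and>
                                  (c has_vector_derivative w) (at 0)}"

definition surface2 :: "'a::euclidean_space set \<Rightarrow> bool" where
  "surface2 M \<longleftrightarrow> (\<forall>x\<in>M. \<exists>U (V :: (real^2) set) \<phi> \<psi>. open U \<and> x \<in> U \<and> open V \<and>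
      smooth_on V \<phi> \<and> homeomorphism V (M \<inter> U) \<phi> \<psi> \<and>
      (\<forall>y\<in>V. \<exists>\<phi>'. (\<phi> has_derivative \<phi>') (at y) \<and> inj \<phi>'))"

definition almost_semidefinite :: "((real^4) \<times> (real^4)) set \<Rightarrow> bool" where
  "almost_semidefinite M \<longleftrightarrow> (\<forall>p v A B. unit_tangent p v \<and> endpoints (p, v) \<in> M \<and>
      normal_vec p v A \<and> normal_vec p v B \<and>
      Tgeo p v A B \<in> tangent_space M (endpoints (p, v)) \<and> normX p v A B = 0
      \<longrightarrow> normK p v A B \<ge> 0)"

definition Dfun :: "real^4 \<Rightarrow> (real^4) \<times> (real^4) \<Rightarrow> real" where
  "Dfun o' l = (INF z \<in> {(p, v, t). unit_tangent p v \<and> endpoints (p, v) = l}.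
                   hdist o' (geod (fst z) (fst (snd z)) (snd (snd z)))) ^ 2"

definition critical_on :: "'a::real_normed_vector set \<Rightarrow> ('a \<Rightarrow> real) \<Rightarrow> 'a \<Rightarrow> bool" where
  "critical_on M f x \<longleftrightarrow> x \<in> M \<and> (\<forall>c w. (\<forall>t. c t \<in> M) \<and> c 0 = x \<and>
      (c has_vector_derivative w) (at 0) \<longrightarrow> ((f \<circ> c) has_real_derivative 0) (at 0))"

end

theory Submission
  imports Defs
begin

text \<open>Tangent vectors to \<open>L\<close> are represented by normal Jacobi data \<open>(J(0), J'(0))\<close>. On an almost
  semidefinite surface a tangent vector with \<open>J(0) = 0\<close> is \<open>g_\<times>\<close>-null of \<open>g_K\<close>-norm
  \<open>-|J'(0)|\<^sup>2\<close>, hence zero; so \<open>\<psi>\<close> is injective on the two-dimensional tangent plane, hence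
  onto the two-dimensional normal space, which is (a). In terms of the ideal endpoints \<open>x, y\<close>,
  \<open>cosh\<^sup>2\<close> of the distance from \<open>o\<close> is \<open>-2\<langle>o,x\<rangle>\<langle>o,y\<rangle>/\<langle>x,y\<rangle>\<close>. At a critical point with
  \<open>D > 0\<close>, (a) realises the normal direction towards \<open>o\<close> by a tangent vector, along which \<open>D\<close>
  decreases to first order; so \<open>D = 0\<close>, i.e. \<open>o\<close> lies on the geodesic. There the component of
  \<open>o\<close> orthogonal to the plane of the endpoints vanishes and has differential
  \<open>(J(0), J'(0)) \<mapsto> -J(0)\<close>, injective on the tangent plane, so it vanishes nowhere else nearby:
  the minimum is strict. Finally the sublevel sets of \<open>D\<close> on \<open>L\<close> are compact, which gives
  properness on the closed subset \<open>M\<close>.\<close>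

section \<open>The Minkowski form\<close>

text \<open>\<open>sum_4\<close> enumerates the indices \<open>1, 2, 3, 4\<close>, and \<open>4 = 0\<close> in the type \<open>4\<close>.\<close>
lemma mink_expand: "mink x y = - x$0*y$0 + x$1*y$1 + x$2*y$2 + x$3*y$3"
proof -
  have "(4::4) = 0" by simp
  then show ?thesis unfolding mink_def sum_4 by (simp only:) simp
qed

lemma vec4_eq_iff: "(x::real^4) = y \<longleftrightarrow> x$0 = y$0 \<and> x$1 = y$1 \<and> x$2 = y$2 \<and> x$3 = y$3"
proof -
  have "(4::4) = 0" by simp
  then show ?thesis unfolding vec_eq_iff forall_4 by (simp only:) auto
qed

lemma mink_commute: "mink x y = mink y x"
  by (simp add: mink_expand algebra_simps)

lemma mink_add_left: "mink (x + y) z = mink x z + mink y z"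
  and mink_add_right: "mink z (x + y) = mink z x + mink z y"
  and mink_diff_left: "mink (x - y) z = mink x z - mink y z"
  and mink_diff_right: "mink z (x - y) = mink z x - mink z y"
  and mink_scaleR_left: "mink (c *\<^sub>R x) z = c * mink x z"
  and mink_scaleR_right: "mink z (c *\<^sub>R x) = c * mink z x"
  and mink_minus_left: "mink (- x) z = - mink x z"
  and mink_minus_right: "mink z (- x) = - mink z x"
  by (simp_all add: mink_expand algebra_simps)

lemma mink_zero_left [simp]: "mink 0 z = 0"
  and mink_zero_right [simp]: "mink z 0 = 0"
  by (simp_all add: mink_expand)

lemmas mink_simps = mink_add_left mink_add_right mink_diff_left mink_diff_right
  mink_scaleR_left mink_scaleR_right mink_minus_left mink_minus_right

lemma bounded_bilinear_mink: "bounded_bilinear mink"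
proof (rule bounded_bilinear.intro)
  show "\<exists>K. \<forall>x y. norm (mink x y) \<le> norm x * norm y * K"
  proof (intro exI allI)
    fix x y :: "real^4"
    have "\<bar>x$i * y$i\<bar> \<le> norm x * norm y" for i
      by (simp add: abs_mult mult_mono' component_le_norm_cart)
    from this[of 0] this[of 1] this[of 2] this[of 3]
    show "norm (mink x y) \<le> norm x * norm y * 4"
      by (simp add: mink_expand)
  qed
qed (simp_all add: mink_simps)

lemmas has_derivative_mink [derivative_intros] = bounded_bilinear.FDERIV[OF bounded_bilinear_mink]
lemmas continuous_on_mink [continuous_intros] = bounded_bilinear.continuous_on[OF bounded_bilinear_mink]

lemma cauchy_schwarz3:
  "(a1*b1 + a2*b2 + a3*b3)^2 \<le> (a1^2 + a2^2 + (a3::real)^2) * (b1^2 + b2^2 + b3^2)"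
proof -
  have "(a1^2+a2^2+a3^2)*(b1^2+b2^2+b3^2) - (a1*b1+a2*b2+a3*b3)^2
        = (a1*b2-a2*b1)^2+(a1*b3-a3*b1)^2+(a2*b3-a3*b2)^2"
    by (simp add: power2_eq_square algebra_simps)
  then show ?thesis by (smt (verit) zero_le_power2)
qed

lemma mink_orthogonal_timelike:
  assumes q: "mink q q < 0" and w: "mink w q = 0"
  shows mink_orthogonal_timelike_nonneg: "mink w w \<ge> 0"
    and mink_orthogonal_timelike_eq_0: "mink w w = 0 \<Longrightarrow> w = 0"
proof -
  define sq where "sq = q$1^2 + q$2^2 + q$3^2"
  define sw where "sw = w$1^2 + w$2^2 + w$3^2"
  have q': "sq < q$0^2" using q by (simp add: mink_expand sq_def power2_eq_square)
  have "w$0*q$0 = w$1*q$1 + w$2*q$2 + w$3*q$3" using w by (simp add: mink_expand)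
  then have cs: "(w$0*q$0)^2 \<le> sw * sq" unfolding sw_def sq_def by (metis cauchy_schwarz3)
  have "sq \<ge> 0" "sw \<ge> 0" by (simp_all add: sq_def sw_def)
  have "w$0^2 \<le> sw \<and> (w$0^2 = sw \<longrightarrow> w = 0)"
  proof (cases "sw = 0")
    case True
    then have "w$1 = 0" "w$2 = 0" "w$3 = 0" by (simp_all add: sw_def add_nonneg_eq_0_iff)
    moreover have "q$0 \<noteq> 0" using q' \<open>sq \<ge> 0\<close> by auto
    with cs True have "w$0 = 0" by simp
    ultimately show ?thesis using True by (simp add: vec4_eq_iff)
  next
    case False
    with \<open>sw \<ge> 0\<close> q' have "sw * sq < sw * q$0^2" by simp
    with cs have "w$0^2 * q$0^2 < sw * q$0^2" by (simp add: power_mult_distrib)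
    then show ?thesis by (simp add: mult_less_cancel_right)
  qed
  then show "mink w w \<ge> 0" and "mink w w = 0 \<Longrightarrow> w = 0"
    by (auto simp: mink_expand sw_def power2_eq_square)
qed

lemma mink_hyp_future_neg:
  assumes o: "o' \<in> hyp" and x0: "x$0 > 0" and xx: "mink x x \<le> 0"
  shows "mink o' x < 0"
proof -
  define so where "so = o'$1^2 + o'$2^2 + o'$3^2"
  define sx where "sx = x$1^2 + x$2^2 + x$3^2"
  have so: "so = o'$0^2 - 1" and "o'$0 > 0"
    using o by (auto simp: hyp_def mink_expand so_def power2_eq_square)
  have sx: "sx \<le> x$0^2" using xx by (simp add: mink_expand sx_def power2_eq_square)
  have cs: "(o'$1*x$1 + o'$2*x$2 + o'$3*x$3)^2 \<le> so * sx"
    unfolding so_def sx_def by (rule cauchy_schwarz3)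
  have "so * sx \<le> so * x$0^2" using sx by (simp add: mult_left_mono so_def)
  also have "\<dots> < o'$0^2 * x$0^2" using so x0 by simp
  finally have "(o'$1*x$1 + o'$2*x$2 + o'$3*x$3)^2 < (o'$0 * x$0)^2"
    using cs by (simp add: power_mult_distrib)
  then have "\<bar>o'$1*x$1 + o'$2*x$2 + o'$3*x$3\<bar> < \<bar>o'$0 * x$0\<bar>"
    using power2_less_imp_less[of "\<bar>o'$1*x$1 + o'$2*x$2 + o'$3*x$3\<bar>" "\<bar>o'$0 * x$0\<bar>"] by simp
  then show ?thesis using \<open>o'$0 > 0\<close> x0 by (simp add: mink_expand)
qed

lemma unit_tangentD:
  assumes "unit_tangent p v"
  shows "p \<in> hyp" "mink p p = -1" "mink p v = 0" "mink v p = 0" "mink v v = 1"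
  using assms by (auto simp: unit_tangent_def hyp_def mink_commute)

lemma unit_tangent_time_bound:
  assumes u: "unit_tangent p v"
  shows "\<bar>v$0\<bar> < p$0"
proof -
  note uD = unit_tangentD[OF u]
  have p0: "p$0 > 0" using u by (simp add: unit_tangent_def hyp_def)
  define sp where "sp = p$1^2 + p$2^2 + p$3^2"
  define sv where "sv = v$1^2 + v$2^2 + v$3^2"
  have "sp = p$0^2 - 1" "sv = 1 + v$0^2"
    using uD by (simp_all add: mink_expand sp_def sv_def power2_eq_square)
  moreover have "p$0 * v$0 = p$1 * v$1 + p$2 * v$2 + p$3 * v$3"
    using uD by (simp add: mink_expand)
  then have "(p$0 * v$0)^2 \<le> sp * sv" unfolding sp_def sv_def by (metis cauchy_schwarz3)
  ultimately have "p$0^2 * v$0^2 \<le> (p$0^2 - 1) * (1 + v$0^2)" by (simp add: power_mult_distrib)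
  then have "v$0^2 < p$0^2" by (simp add: algebra_simps)
  then show ?thesis using p0 power2_less_imp_less[of "\<bar>v$0\<bar>" "p$0"] by simp
qed

lemma unit_tangent_time_pos:
  assumes "unit_tangent p v"
  shows "p$0 + v$0 > 0" "p$0 - v$0 > 0"
  using unit_tangent_time_bound[OF assms] by linarith+

section \<open>Oriented geodesics as pairs of ideal endpoints\<close>

definition endpoint_pairs :: "((real^4) \<times> (real^4)) set" where
  "endpoint_pairs = {(x, y). mink x x = 0 \<and> mink y y = 0 \<and> x$0 = 1 \<and> y$0 = 1 \<and> mink x y < 0}"

text \<open>A unit tangent vector of the geodesic with endpoints \<open>(x, y)\<close>, based at the point of the
  geodesic where \<open>x\<close> and \<open>y\<close> enter with equal weight.\<close>
definition frame_of :: "(real^4) \<times> (real^4) \<Rightarrow> (real^4) \<times> (real^4)" where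
  "frame_of z = (inverse (sqrt (-2 * mink (fst z) (snd z))) *\<^sub>R (fst z + snd z),
                 inverse (sqrt (-2 * mink (fst z) (snd z))) *\<^sub>R (fst z - snd z))"

lemma endpoint_pairs_mink_neg: "l \<in> endpoint_pairs \<Longrightarrow> mink (fst l) (snd l) < 0"
  unfolding endpoint_pairs_def by (cases l) auto

lemma endpoints_in_endpoint_pairs:
  assumes u: "unit_tangent p v"
  shows "endpoints (p, v) \<in> endpoint_pairs"
proof -
  note uD = unit_tangentD[OF u] and t = unit_tangent_time_pos[OF u]
  have null: "mink (p+v) (p+v) = 0" "mink (p-v) (p-v) = 0"
    using uD by (simp_all add: mink_simps)
  have "mink (fst (endpoints (p,v))) (snd (endpoints (p,v))) = -2 / ((p$0+v$0)*(p$0-v$0))"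
    unfolding endpoints_def using uD t by (simp add: mink_simps field_simps)
  also have "\<dots> < 0" using t by (simp add: divide_neg_pos)
  finally show ?thesis
    using null t uD unfolding endpoint_pairs_def endpoints_def by (simp add: mink_simps)
qed

lemma frame_of:
  assumes "l \<in> endpoint_pairs"
  shows unit_tangent_frame_of: "unit_tangent (fst (frame_of l)) (snd (frame_of l))"
    and endpoints_frame_of: "endpoints (frame_of l) = l"
proof -
  obtain x y where l: "l = (x,y)" by force
  have h: "mink x x = 0" "mink y y = 0" "x$0 = 1" "y$0 = 1" "mink x y < 0"
    using assms l by (auto simp: endpoint_pairs_def)
  define s where "s = sqrt (-2 * mink x y)"
  have s: "s > 0" "s^2 = -2 * mink x y" using h(5) by (auto simp: s_def)
  have frame: "frame_of l = (inverse s *\<^sub>R (x+y), inverse s *\<^sub>R (x-y))"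
    by (simp add: frame_of_def l s_def)
  have "mink (inverse s *\<^sub>R (x+y)) (inverse s *\<^sub>R (x+y)) = 2 * mink x y / s^2"
       "mink (inverse s *\<^sub>R (x-y)) (inverse s *\<^sub>R (x-y)) = -2 * mink x y / s^2"
       "mink (inverse s *\<^sub>R (x+y)) (inverse s *\<^sub>R (x-y)) = 0"
    using h by (simp_all add: mink_simps mink_commute[of y x] power2_eq_square field_simps)
  moreover have "(inverse s *\<^sub>R (x+y))$0 > 0" using h s by simp
  ultimately show "unit_tangent (fst (frame_of l)) (snd (frame_of l))"
    unfolding frame unit_tangent_def hyp_def using s h(5) by simp
  have "inverse s *\<^sub>R (x+y) + inverse s *\<^sub>R (x-y) = (2 / s) *\<^sub>R x"
       "inverse s *\<^sub>R (x+y) - inverse s *\<^sub>R (x-y) = (2 / s) *\<^sub>R y"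
    by (simp_all add: vec_eq_iff field_simps)
  then show "endpoints (frame_of l) = l"
    unfolding frame endpoints_def using h s l by simp
qed

lemma Lspace_eq_endpoint_pairs: "Lspace = endpoint_pairs"
proof
  show "Lspace \<subseteq> endpoint_pairs" unfolding Lspace_def using endpoints_in_endpoint_pairs by auto
  show "endpoint_pairs \<subseteq> Lspace"
  proof
    fix l assume "l \<in> endpoint_pairs"
    from frame_of[OF this] show "l \<in> Lspace" unfolding Lspace_def
      by (metis (mono_tags, lifting) case_prodI image_eqI mem_Collect_eq prod.collapse)
  qed
qed

section \<open>The geodesic flow on unit tangent vectors\<close>

definition boost :: "real \<Rightarrow> (real^4) \<times> (real^4) \<Rightarrow> (real^4) \<times> (real^4)" where
  "boost t z = (cosh t *\<^sub>R fst z + sinh t *\<^sub>R snd z, sinh t *\<^sub>R fst z + cosh t *\<^sub>R snd z)"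

lemma boost_0 [simp]: "boost 0 z = z"
  by (simp add: boost_def)

lemma endpoints_boost: "endpoints (boost t z) = endpoints z"
proof -
  obtain x y where z: "z = (x,y)" by force
  have sum: "cosh t *\<^sub>R x + sinh t *\<^sub>R y + (sinh t *\<^sub>R x + cosh t *\<^sub>R y) = exp t *\<^sub>R (x + y)"
    and diff: "cosh t *\<^sub>R x + sinh t *\<^sub>R y - (sinh t *\<^sub>R x + cosh t *\<^sub>R y) = exp (-t) *\<^sub>R (x - y)"
    by (simp_all add: cosh_plus_sinh[symmetric] cosh_minus_sinh[symmetric] algebra_simps)
  have "(cosh t *\<^sub>R x + sinh t *\<^sub>R y)$0 + (sinh t *\<^sub>R x + cosh t *\<^sub>R y)$0 = exp t * (x$0 + y$0)"
       "(cosh t *\<^sub>R x + sinh t *\<^sub>R y)$0 - (sinh t *\<^sub>R x + cosh t *\<^sub>R y)$0 = exp (-t) * (x$0 - y$0)"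
    using arg_cong[OF sum, of "\<lambda>w. w$0"] arg_cong[OF diff, of "\<lambda>w. w$0"] by simp_all
  then show ?thesis unfolding z boost_def endpoints_def fst_conv snd_conv sum diff by simp
qed

lemma unit_tangent_boost:
  assumes u: "unit_tangent p v"
  shows "unit_tangent (fst (boost t (p,v))) (snd (boost t (p,v)))"
proof -
  note uD = unit_tangentD[OF u]
  have cs: "cosh t ^ 2 - sinh t ^ 2 = 1" using cosh_square_eq[of t] by simp
  have "\<bar>sinh t\<bar> < cosh t"
    using cosh_square_eq[of t] power2_less_imp_less[of "\<bar>sinh t\<bar>" "cosh t"] by simp
  with unit_tangent_time_bound[OF u] have "\<bar>sinh t\<bar> * \<bar>v$0\<bar> < cosh t * p$0"
    by (intro mult_strict_mono') auto
  then have "(cosh t *\<^sub>R p + sinh t *\<^sub>R v)$0 > 0"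
    using abs_ge_minus_self[of "sinh t * v$0"] by (simp add: abs_mult)
  with uD cs show ?thesis
    unfolding boost_def unit_tangent_def hyp_def
    by (simp add: mink_simps power2_eq_square algebra_simps)
qed

lemma endpoints_eq_imp_boost:
  assumes u: "unit_tangent p v" and u1: "unit_tangent p1 v1"
    and e: "endpoints (p,v) = endpoints (p1,v1)"
  obtains t where "(p,v) = boost t (p1,v1)"
proof -
  note t = unit_tangent_time_pos[OF u] and t1 = unit_tangent_time_pos[OF u1]
  define l where "l = (p$0+v$0)/(p1$0+v1$0)"
  define m where "m = (p$0-v$0)/(p1$0-v1$0)"
  have l: "l > 0" "m > 0" using t t1 by (simp_all add: l_def m_def)
  have "p + v = (p$0+v$0) *\<^sub>R (inverse (p$0+v$0) *\<^sub>R (p+v))"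
       "p - v = (p$0-v$0) *\<^sub>R (inverse (p$0-v$0) *\<^sub>R (p-v))" using t by simp_all
  with e have pv: "p + v = l *\<^sub>R (p1 + v1)" "p - v = m *\<^sub>R (p1 - v1)"
    by (simp_all add: endpoints_def l_def m_def divide_inverse)
  have "mink (p+v) (p-v) = -2" "mink (l *\<^sub>R (p1 + v1)) (m *\<^sub>R (p1 - v1)) = -2 * l * m"
    using unit_tangentD[OF u] unit_tangentD[OF u1] by (simp_all add: mink_simps)
  with pv have "l * m = 1" by simp
  then have "m = inverse l" using l by (simp add: field_simps)
  then have ch: "cosh (ln l) = (l + m)/2" "sinh (ln l) = (l - m)/2"
    using l by (simp_all add: cosh_ln_real sinh_ln_real)
  have "p = (1/2) *\<^sub>R ((p + v) + (p - v))" "v = (1/2) *\<^sub>R ((p + v) - (p - v))"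
    by (simp_all add: vec_eq_iff)
  then have "p = cosh (ln l) *\<^sub>R p1 + sinh (ln l) *\<^sub>R v1" "v = sinh (ln l) *\<^sub>R p1 + cosh (ln l) *\<^sub>R v1"
    unfolding pv ch by (simp_all add: vec_eq_iff field_simps)
  then show ?thesis using that[of "ln l"] by (simp add: boost_def)
qed

lemma normal_component:
  assumes u: "unit_tangent p v" and o: "o' \<in> hyp"
  defines "N \<equiv> o' + mink o' p *\<^sub>R p - mink o' v *\<^sub>R v"
  shows "normal_vec p v N" and "mink o' p ^ 2 - mink o' v ^ 2 = 1 + mink N N"
    and "mink N N \<ge> 0" and "mink o' p < 0"
proof -
  note uD = unit_tangentD[OF u]
  have oo: "mink o' o' = -1" using o by (simp add: hyp_def)
  show n: "normal_vec p v N" unfolding normal_vec_def N_def using uD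
    by (simp add: mink_simps mink_commute[of p o'] mink_commute[of v o'])
  show "mink o' p ^ 2 - mink o' v ^ 2 = 1 + mink N N" unfolding N_def using uD oo
    by (simp add: mink_simps mink_commute[of p o'] mink_commute[of v o'] power2_eq_square algebra_simps)
  show "mink N N \<ge> 0"
    using mink_orthogonal_timelike_nonneg[of p N] n uD by (simp add: normal_vec_def)
  show "mink o' p < 0"
    using mink_hyp_future_neg[OF o, of p] uD by (simp add: hyp_def)
qed

text \<open>Every oriented geodesic has a unit tangent vector based at the foot of the perpendicular
  from \<open>o'\<close>; the flow parameter is chosen to kill \<open>mink o' v\<close>.\<close>
lemma exists_foot_frame:
  assumes l: "l \<in> Lspace" and o: "o' \<in> hyp"
  obtains p v where "unit_tangent p v" "endpoints (p,v) = l" "mink o' v = 0"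
proof -
  have lc: "l \<in> endpoint_pairs" using l Lspace_eq_endpoint_pairs by simp
  define p1 where "p1 = fst (frame_of l)"
  define v1 where "v1 = snd (frame_of l)"
  have u1: "unit_tangent p1 v1" and e1: "endpoints (p1,v1) = l"
    using frame_of[OF lc] by (simp_all add: p1_def v1_def)
  define a where "a = - mink o' p1"
  define b where "b = - mink o' v1"
  note d = normal_component[OF u1 o]
  have a0: "a > 0" using d(4) by (simp add: a_def)
  have "b^2 < a^2" using d(2,3) by (simp add: a_def b_def)
  then have ab: "\<bar>b\<bar> < a" using power2_less_imp_less[of "\<bar>b\<bar>" a] a0 by simp
  define e where "e = sqrt ((a-b)/(a+b))"
  have e0: "e > 0" and "e^2 = (a-b)/(a+b)" using ab by (simp_all add: e_def)
  then have "(a+b) * e * e = a - b" using ab by (simp add: field_simps power2_eq_square)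
  moreover have "sinh (ln e) * a + cosh (ln e) * b = ((a+b) * e * e - (a - b)) / (2*e)"
    using e0 by (simp add: cosh_ln_real sinh_ln_real field_simps)
  ultimately have key: "sinh (ln e) * a + cosh (ln e) * b = 0" by simp
  show ?thesis
  proof (rule that)
    show "unit_tangent (fst (boost (ln e) (p1,v1))) (snd (boost (ln e) (p1,v1)))"
      using unit_tangent_boost[OF u1] .
    show "endpoints (fst (boost (ln e) (p1,v1)), snd (boost (ln e) (p1,v1))) = l"
      using endpoints_boost[of "ln e" "(p1,v1)"] e1 by simp
    show "mink o' (snd (boost (ln e) (p1,v1))) = 0"
      using key by (simp add: boost_def mink_simps a_def b_def algebra_simps)
  qed
qed

section \<open>The differential of the endpoint map\<close>

lemma has_vector_derivative_compose_at:
  assumes "(f has_vector_derivative f') (at x)" and "(g has_derivative g') (at (f x))"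
  shows "((\<lambda>t. g (f t)) has_vector_derivative g' f') (at x)"
  using vector_derivative_diff_chain_within[OF assms(1) has_derivative_at_withinI[OF assms(2)]]
  by (simp add: o_def)

lemma has_vector_derivative_constant_eq_0:
  assumes "(f has_vector_derivative f') (at x)" and "\<And>t. f t = k"
  shows "f' = 0"
proof -
  have "f = (\<lambda>t. k)" using assms(2) by auto
  then show ?thesis
    using assms(1) vector_derivative_unique_at[OF _ has_vector_derivative_const] by metis
qed

lemma has_vector_derivative_line:
  "((\<lambda>s. (p + s *\<^sub>R A, v + s *\<^sub>R B)) has_vector_derivative (A, B)) (at 0)"
  by (auto intro!: derivative_eq_intros)

lemmas has_derivative_vec_nth [derivative_intros] =
  bounded_linear.has_derivative[OF bounded_linear_vec_nth]

abbreviation dE :: "(real^4) \<times> (real^4) \<Rightarrow> (real^4) \<times> (real^4) \<Rightarrow> (real^4) \<times> (real^4)" where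
  "dE z \<equiv> frechet_derivative endpoints (at z)"

lemma has_derivative_endpoints:
  assumes "fst z$0 + snd z$0 \<noteq> 0" "fst z$0 - snd z$0 \<noteq> 0"
  shows "(endpoints has_derivative dE z) (at z)"
proof -
  have "endpoints differentiable (at z)"
    unfolding differentiable_def endpoints_def[abs_def] using assms
    by (intro exI) (rule derivative_intros | simp)+
  then show ?thesis by (simp add: frechet_derivative_works)
qed

lemma unit_tangent_has_derivative_endpoints:
  "unit_tangent p v \<Longrightarrow> (endpoints has_derivative dE (p,v)) (at (p,v))"
  using unit_tangent_time_pos[of p v] by (intro has_derivative_endpoints) auto

lemma unit_tangent_linear_dE: "unit_tangent p v \<Longrightarrow> linear (dE (p,v))"
  using unit_tangent_has_derivative_endpoints has_derivative_linear by blast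

lemma differentiable_frame_of:
  "mink (fst z) (snd z) < 0 \<Longrightarrow> frame_of differentiable (at z)"
  unfolding differentiable_def frame_of_def[abs_def]
  by (intro exI) (rule derivative_intros | simp)+

lemma dE_boost:
  assumes "fst z$0 + snd z$0 \<noteq> 0" "fst z$0 - snd z$0 \<noteq> 0"
  shows "dE (boost t z) (boost t h) = dE z h"
proof -
  have "fst (boost t z)$0 + snd (boost t z)$0 = exp t * (fst z$0 + snd z$0)"
       "fst (boost t z)$0 - snd (boost t z)$0 = exp (-t) * (fst z$0 - snd z$0)"
    by (simp_all add: boost_def cosh_plus_sinh[symmetric] cosh_minus_sinh[symmetric] algebra_simps)
  then have "(endpoints has_derivative dE (boost t z)) (at (boost t z))"
    using assms by (intro has_derivative_endpoints) auto
  moreover have "(boost t has_derivative boost t) (at z)"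
    unfolding boost_def[abs_def] by (rule derivative_eq_intros refl)+
  ultimately have "((\<lambda>x. endpoints (boost t x)) has_derivative (\<lambda>h. dE (boost t z) (boost t h))) (at z)"
    using has_derivative_compose by blast
  then have "(endpoints has_derivative (\<lambda>h. dE (boost t z) (boost t h))) (at z)"
    by (simp add: endpoints_boost)
  from has_derivative_unique[OF this has_derivative_endpoints[OF assms]]
  show ?thesis by (rule fun_cong[where x=h, simplified])
qed

text \<open>The generator \<open>(v, p)\<close> of the flow moves along the geodesic, so it is killed by \<open>dE\<close>.\<close>
lemma dE_flow_direction:
  assumes u: "unit_tangent p v"
  shows "dE (p,v) (v,p) = 0"
proof -
  have "((\<lambda>t. boost t (p,v)) has_vector_derivative (v,p)) (at 0)"
    unfolding boost_def fst_conv snd_conv by (rule derivative_eq_intros refl | simp)+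
  from has_vector_derivative_compose_at[OF this] unit_tangent_has_derivative_endpoints[OF u]
  have "((\<lambda>t. endpoints (boost t (p,v))) has_vector_derivative dE (p,v) (v,p)) (at 0)" by simp
  then show ?thesis by (rule has_vector_derivative_constant_eq_0) (rule endpoints_boost)
qed

lemma tangent_space_mono: "M \<subseteq> N \<Longrightarrow> tangent_space M x \<subseteq> tangent_space N x"
  unfolding tangent_space_def by (intro Collect_mono) (metis subsetD)

text \<open>A tangent vector to \<open>Lspace\<close>, lifted through the section \<open>frame_of\<close>: the constraints
  defining unit tangent vectors differentiate to the three linear conditions.\<close>
lemma tangent_lift_frame_of:
  assumes w: "w \<in> tangent_space Lspace l"
  defines "p1 \<equiv> fst (frame_of l)" and "v1 \<equiv> snd (frame_of l)"
  obtains A B where "mink A p1 = 0" "mink B v1 = 0" "mink B p1 + mink A v1 = 0"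
    "w = dE (p1,v1) (A,B)"
proof -
  obtain c where cL: "\<forall>t. c t \<in> Lspace" and c0: "c 0 = l" and cw: "(c has_vector_derivative w) (at 0)"
    using w unfolding tangent_space_def by blast
  have ce: "c t \<in> endpoint_pairs" for t using cL Lspace_eq_endpoint_pairs by auto
  note ut = unit_tangent_frame_of[OF ce]
  obtain S' where "(frame_of has_derivative S') (at (c 0))"
    using differentiable_frame_of[OF endpoint_pairs_mink_neg[OF ce]] by (auto simp: differentiable_def)
  from has_vector_derivative_compose_at[OF cw this]
  have G: "((\<lambda>t. frame_of (c t)) has_vector_derivative S' w) (at 0)" .
  define A B where "A = fst (S' w)" and "B = snd (S' w)"
  have Gf: "((\<lambda>t. fst (frame_of (c t))) has_vector_derivative A) (at 0)"
    and Gs: "((\<lambda>t. snd (frame_of (c t))) has_vector_derivative B) (at 0)"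
    unfolding A_def B_def
    by (rule bounded_linear.has_vector_derivative[OF bounded_linear_fst G]
             bounded_linear.has_vector_derivative[OF bounded_linear_snd G])+
  have "mink (fst (frame_of (c 0))) A + mink A (fst (frame_of (c 0))) = 0"
    by (rule has_vector_derivative_constant_eq_0[OF bounded_bilinear.has_vector_derivative[OF
          bounded_bilinear_mink Gf Gf]]) (rule unit_tangentD(2)[OF ut])
  moreover have "mink (fst (frame_of (c 0))) B + mink A (snd (frame_of (c 0))) = 0"
    by (rule has_vector_derivative_constant_eq_0[OF bounded_bilinear.has_vector_derivative[OF
          bounded_bilinear_mink Gf Gs]]) (rule unit_tangentD(3)[OF ut])
  moreover have "mink (snd (frame_of (c 0))) B + mink B (snd (frame_of (c 0))) = 0"
    by (rule has_vector_derivative_constant_eq_0[OF bounded_bilinear.has_vector_derivative[OF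
          bounded_bilinear_mink Gs Gs]]) (rule unit_tangentD(5)[OF ut])
  ultimately have "mink p1 A + mink A p1 = 0" "mink p1 B + mink A v1 = 0" "mink v1 B + mink B v1 = 0"
    unfolding c0 p1_def v1_def by simp_all
  moreover have "w = dE (p1,v1) (A,B)"
  proof (rule vector_derivative_unique_at[OF cw])
    have "((\<lambda>t. endpoints (frame_of (c t))) has_vector_derivative dE (p1,v1) (A,B)) (at 0)"
      using has_vector_derivative_compose_at[OF G
          unit_tangent_has_derivative_endpoints[OF ut[of 0], unfolded prod.collapse]] c0
      by (simp add: A_def B_def p1_def v1_def)
    then show "(c has_vector_derivative dE (p1,v1) (A,B)) (at 0)"
      by (simp add: endpoints_frame_of[OF ce])
  qed
  ultimately show ?thesis
    using that[of A B] mink_commute[of p1 A] mink_commute[of p1 B] mink_commute[of v1 B] by argo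
qed

text \<open>Adding a multiple of the flow generator makes both components normal.\<close>
lemma dE_normalize:
  assumes u: "unit_tangent p v"
    and "mink A p = 0" "mink B v = 0" "mink B p + mink A v = 0"
  obtains A' B' where "normal_vec p v A'" "normal_vec p v B'" "dE (p,v) (A,B) = dE (p,v) (A',B')"
proof
  define \<alpha> where "\<alpha> = mink A v"
  show "normal_vec p v (A - \<alpha> *\<^sub>R v)" "normal_vec p v (B - \<alpha> *\<^sub>R p)"
    using assms by (simp_all add: normal_vec_def \<alpha>_def mink_simps unit_tangentD[OF u])
  note lin = unit_tangent_linear_dE[OF u]
  have "(A, B) = (A - \<alpha> *\<^sub>R v, B - \<alpha> *\<^sub>R p) + \<alpha> *\<^sub>R (v, p)" by simp
  then have "dE (p,v) (A,B) = dE (p,v) (A - \<alpha> *\<^sub>R v, B - \<alpha> *\<^sub>R p) + \<alpha> *\<^sub>R dE (p,v) (v,p)"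
    by (simp only: linear_add[OF lin] linear_scale[OF lin])
  then show "dE (p,v) (A,B) = dE (p,v) (A - \<alpha> *\<^sub>R v, B - \<alpha> *\<^sub>R p)"
    by (simp add: dE_flow_direction[OF u])
qed

lemma tangent_lift:
  assumes u: "unit_tangent p v" and w: "w \<in> tangent_space Lspace (endpoints (p,v))"
  obtains A B where "normal_vec p v A" "normal_vec p v B" "w = dE (p,v) (A,B)"
proof -
  define l where "l = endpoints (p,v)"
  have le: "l \<in> endpoint_pairs" using endpoints_in_endpoint_pairs[OF u] by (simp add: l_def)
  define p1 v1 where "p1 = fst (frame_of l)" and "v1 = snd (frame_of l)"
  have u1: "unit_tangent p1 v1" and e1: "endpoints (p1,v1) = l"
    using frame_of[OF le] by (simp_all add: p1_def v1_def)
  obtain t where pv: "(p,v) = boost t (p1,v1)"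
    using endpoints_eq_imp_boost[OF u u1] e1 unfolding l_def by metis
  obtain A1 B1 where "mink A1 p1 = 0" "mink B1 v1 = 0" "mink B1 p1 + mink A1 v1 = 0"
      and w1: "w = dE (p1,v1) (A1,B1)"
    using tangent_lift_frame_of[OF w[folded l_def]] unfolding p1_def v1_def by blast
  then obtain A2 B2 where n2: "normal_vec p1 v1 A2" "normal_vec p1 v1 B2"
      and w2: "w = dE (p1,v1) (A2,B2)"
    using dE_normalize[OF u1] by blast
  have "w = dE (p,v) (boost t (A2,B2))"
    unfolding pv w2 using unit_tangent_time_pos[OF u1] by (intro dE_boost[symmetric]) auto
  moreover have "normal_vec p v (fst (boost t (A2,B2)))" "normal_vec p v (snd (boost t (A2,B2)))"
    using pv n2 by (auto simp: normal_vec_def boost_def mink_simps)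
  ultimately show ?thesis
    using that[of "fst (boost t (A2,B2))" "snd (boost t (A2,B2))"] by simp
qed

section \<open>Tangent planes of almost semidefinite surfaces\<close>

lemma normX_zero_left: "normX p v 0 B = 0"
proof -
  have "det (rows4 p v 0 d) = 0" for d
    by (rule det_zero_row(1)[of 2]) (simp add: row_def rows4_def vec_eq_iff)
  then have "crossH p v 0 = 0" by (simp add: crossH_def vec_eq_iff)
  then show ?thesis by (simp add: normX_def)
qed

text \<open>A tangent vector represented by a Jacobi field vanishing at time 0 is null for \<open>g_\<times>\<close> and
  has \<open>g_K\<close>-square norm \<open>-|J'(0)|^2\<close>, so almost semidefiniteness forces \<open>J' (0) = 0\<close>.\<close>
lemma almost_semidefinite_vertical_eq_0:
  assumes as: "almost_semidefinite M" and u: "unit_tangent p v" and "endpoints (p,v) \<in> M"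
    and B: "normal_vec p v B" and "dE (p,v) (0,B) \<in> tangent_space M (endpoints (p,v))"
  shows "B = 0"
proof -
  have "normal_vec p v 0" by (simp add: normal_vec_def)
  with assms have "normK p v 0 B \<ge> 0"
    unfolding almost_semidefinite_def Tgeo_def by (simp add: normX_zero_left)
  then have "mink B B \<le> 0" by (simp add: normK_def)
  moreover have "mink B B \<ge> 0" "mink B B = 0 \<Longrightarrow> B = 0"
    using mink_orthogonal_timelike[of p B] unit_tangentD[OF u] B by (auto simp: normal_vec_def)
  ultimately show ?thesis by linarith
qed

lemma tangent_spaceI:
  "(\<And>t. c t \<in> M) \<Longrightarrow> c 0 = x \<Longrightarrow> (c has_vector_derivative w) (at 0) \<Longrightarrow> w \<in> tangent_space M x"
  unfolding tangent_space_def by auto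

text \<open>Along the curve \<open>t \<mapsto> \<phi> (y0 + k sin (t/k) e)\<close>, which stays in a ball around \<open>y0\<close>.\<close>
lemma derivative_in_tangent_space:
  assumes "open V" "y0 \<in> V" "\<phi> ` V \<subseteq> M" and d: "(\<phi> has_derivative \<phi>') (at y0)"
  shows "\<phi>' e \<in> tangent_space M (\<phi> y0)"
proof (cases "e = 0")
  case True
  have "((\<lambda>t. \<phi> y0) has_vector_derivative \<phi>' e) (at 0)"
    using True linear_0[OF has_derivative_linear[OF d]] by simp
  then show ?thesis using assms(2,3) by (intro tangent_spaceI) auto
next
  case False
  obtain r where r: "r > 0" "ball y0 r \<subseteq> V" using assms(1,2) open_contains_ball by blast
  define k where "k = r / (2 * norm e)"
  have k: "k > 0" using r False by (simp add: k_def)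
  define h where "h = (\<lambda>t. y0 + (k * sin (t / k)) *\<^sub>R e)"
  have hd: "(h has_vector_derivative e) (at 0)"
    unfolding h_def using k by - (rule derivative_eq_intros refl | simp)+
  have hV: "h t \<in> V" for t
  proof -
    have "\<bar>k * sin (t / k)\<bar> \<le> k" using k abs_sin_le_one[of "t/k"] by (simp add: abs_mult)
    then have "norm ((k * sin (t / k)) *\<^sub>R e) \<le> k * norm e" by (simp add: mult_right_mono)
    also have "\<dots> < r" using r False by (simp add: k_def)
    finally show ?thesis using r by (auto simp: h_def dist_norm)
  qed
  have "h 0 = y0" by (simp add: h_def)
  then have "((\<lambda>t. \<phi> (h t)) has_vector_derivative \<phi>' e) (at 0)"
    using has_vector_derivative_compose_at[OF hd] d by simp
  then show ?thesis
    using hV assms(3) \<open>h 0 = y0\<close> by (intro tangent_spaceI) auto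
qed

lemma surface2_chart:
  assumes "surface2 M" and x: "x \<in> M"
  obtains U and V :: "(real^2) set" and \<phi> \<psi> y0 \<phi>'
  where "open U" "x \<in> U" "open V" "homeomorphism V (M \<inter> U) \<phi> \<psi>" "y0 \<in> V" "\<phi> y0 = x"
    "(\<phi> has_derivative \<phi>') (at y0)" "inj \<phi>'" "\<And>e. \<phi>' e \<in> tangent_space M x"
proof -
  obtain U and V :: "(real^2) set" and \<phi> \<psi> where U: "open U" "x \<in> U" "open V"
    "homeomorphism V (M \<inter> U) \<phi> \<psi>" and D: "\<forall>y\<in>V. \<exists>\<phi>'. (\<phi> has_derivative \<phi>') (at y) \<and> inj \<phi>'"
    using assms(1)[unfolded surface2_def, rule_format, OF x] by blast
  have im: "\<phi> ` V = M \<inter> U" using U(4) by (simp add: homeomorphism_def)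
  have "x \<in> \<phi> ` V" using im x U(2) by simp
  then obtain y0 where y0: "y0 \<in> V" "\<phi> y0 = x" by (auto simp del: im)
  then obtain \<phi>' where d: "(\<phi> has_derivative \<phi>') (at y0)" "inj \<phi>'" using D by blast
  show ?thesis
  proof (rule that[OF U y0 d])
    show "\<phi>' e \<in> tangent_space M x" for e
      using derivative_in_tangent_space[OF U(3) y0(1) _ d(1)] im y0(2) by auto
  qed
qed

lemma normal_vec_span2:
  assumes u: "unit_tangent p v" and "normal_vec p v A1" "normal_vec p v A2"
    and ind: "\<And>c1 c2. c1 *\<^sub>R A1 + c2 *\<^sub>R A2 = 0 \<Longrightarrow> c1 = 0 \<and> c2 = 0"
    and "normal_vec p v w"
  obtains c1 c2 where "w = c1 *\<^sub>R A1 + c2 *\<^sub>R A2"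
proof -
  note uD = unit_tangentD[OF u]
  have n: "mink A1 p = 0" "mink A1 v = 0" "mink A2 p = 0" "mink A2 v = 0" "mink w p = 0" "mink w v = 0"
    using assms by (auto simp: normal_vec_def)
  define F where "F = (\<lambda>c::real^4. c$0 *\<^sub>R p + c$1 *\<^sub>R v + c$2 *\<^sub>R A1 + c$3 *\<^sub>R A2)"
  have lin: "linear F" unfolding F_def by (rule linearI) (simp_all add: algebra_simps)
  have F_pv: "mink (F c) p = - c$0" "mink (F c) v = c$1" for c
    using uD n by (simp_all add: F_def mink_simps)
  have "c = 0" if "F c = 0" for c
  proof -
    have "c$0 = 0" "c$1 = 0" using F_pv[of c] that by simp_all
    moreover from this that have "c$2 *\<^sub>R A1 + c$3 *\<^sub>R A2 = 0" by (simp add: F_def)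
    then have "c$2 = 0" "c$3 = 0" using ind by blast+
    ultimately show "c = 0" by (simp add: vec4_eq_iff)
  qed
  then have "inj F" using lin by (simp add: linear_injective_0)
  then have "surj F" using linear_injective_imp_surjective[OF lin] by simp
  then obtain c where c: "w = F c" by (metis surjD)
  then have "c$0 = 0" "c$1 = 0" using F_pv[of c] n by simp_all
  with c show ?thesis using that[of "c$2" "c$3"] by (simp add: F_def)
qed

lemma tangent_space_lift:
  assumes "M \<subseteq> Lspace" "unit_tangent p v" "w \<in> tangent_space M (endpoints (p,v))"
  obtains A B where "normal_vec p v A" "normal_vec p v B" "w = dE (p,v) (A,B)"
  using tangent_lift assms tangent_space_mono by blast

lemma chart_vertical_eq_0:
  assumes as: "almost_semidefinite M" and u: "unit_tangent p v" and "endpoints (p,v) \<in> M"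
    and "linear \<phi>'" "inj \<phi>'" "\<phi>' h \<in> tangent_space M (endpoints (p,v))"
    and B: "normal_vec p v B" and h: "\<phi>' h = dE (p,v) (0,B)"
  shows "h = 0"
proof -
  have "B = 0" using almost_semidefinite_vertical_eq_0[OF as u _ B] assms h by simp
  then have "\<phi>' h = \<phi>' 0"
    using h linear_0[OF unit_tangent_linear_dE[OF u]] linear_0[OF \<open>linear \<phi>'\<close>] by (simp add: zero_prod_def)
  with \<open>inj \<phi>'\<close> show "h = 0" by (rule injD)
qed

text \<open>The tangent plane is two-dimensional and \<open>(A, B) \<mapsto> A\<close> is injective on it, so it is onto
  the two-dimensional normal space.\<close>
lemma tangent_projects_onto_normals:
  assumes S: "surface2 M" and sub: "M \<subseteq> Lspace" and as: "almost_semidefinite M"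
    and u: "unit_tangent p v" and xM: "endpoints (p,v) \<in> M" and w: "normal_vec p v w"
  obtains B where "normal_vec p v B" "dE (p,v) (w,B) \<in> tangent_space M (endpoints (p,v))"
proof -
  obtain \<phi>' :: "real^2 \<Rightarrow> _" where "linear \<phi>'" "inj \<phi>'"
    and tg: "\<And>e. \<phi>' e \<in> tangent_space M (endpoints (p,v))"
    using surface2_chart[OF S xM] has_derivative_linear by metis
  obtain A1 B1 where 1: "normal_vec p v A1" "normal_vec p v B1" "\<phi>' (axis 1 1) = dE (p,v) (A1,B1)"
    using tangent_space_lift[OF sub u tg] by blast
  obtain A2 B2 where 2: "normal_vec p v A2" "normal_vec p v B2" "\<phi>' (axis 2 1) = dE (p,v) (A2,B2)"
    using tangent_space_lift[OF sub u tg] by blast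
  note linE = unit_tangent_linear_dE[OF u]
  have comb: "\<phi>' (c1 *\<^sub>R axis 1 1 + c2 *\<^sub>R axis 2 1) = dE (p,v) (c1 *\<^sub>R A1 + c2 *\<^sub>R A2, c1 *\<^sub>R B1 + c2 *\<^sub>R B2)"
    for c1 c2
  proof -
    have "\<phi>' (c1 *\<^sub>R axis 1 1 + c2 *\<^sub>R axis 2 1) = c1 *\<^sub>R dE (p,v) (A1,B1) + c2 *\<^sub>R dE (p,v) (A2,B2)"
      using 1 2 by (simp only: linear_add[OF \<open>linear \<phi>'\<close>] linear_scale[OF \<open>linear \<phi>'\<close>])
    also have "\<dots> = dE (p,v) (c1 *\<^sub>R (A1,B1) + c2 *\<^sub>R (A2,B2))"
      by (simp only: linear_add[OF linE] linear_scale[OF linE])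
    finally show ?thesis by simp
  qed
  have normal_comb: "normal_vec p v (c1 *\<^sub>R X + c2 *\<^sub>R Y)"
    if "normal_vec p v X" "normal_vec p v Y" for c1 c2 X Y
    using that by (simp add: normal_vec_def mink_simps)
  have "c1 = 0 \<and> c2 = 0" if "c1 *\<^sub>R A1 + c2 *\<^sub>R A2 = 0" for c1 c2
  proof -
    have "c1 *\<^sub>R axis 1 1 + c2 *\<^sub>R axis 2 1 = (0 :: real^2)"
      using chart_vertical_eq_0[OF as u xM \<open>linear \<phi>'\<close> \<open>inj \<phi>'\<close> tg normal_comb[OF 1(2) 2(2)]]
        comb that by simp
    from arg_cong[OF this, of "\<lambda>x. x$1"] arg_cong[OF this, of "\<lambda>x. x$2"] show ?thesis
      by (simp add: axis_def)
  qed
  then obtain c1 c2 where "w = c1 *\<^sub>R A1 + c2 *\<^sub>R A2"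
    using normal_vec_span2[OF u 1(1) 2(1) _ w] by blast
  then show ?thesis
    using that[OF normal_comb[OF 1(2) 2(2)]] tg comb by metis
qed

section \<open>The distance to a point as a function on the space of geodesics\<close>

text \<open>\<open>cosh\<^sup>2\<close> of the distance from \<open>o'\<close> to the geodesic with endpoints \<open>l\<close>, and the component of
  \<open>o'\<close> orthogonal to the plane spanned by the endpoints; it vanishes iff \<open>o'\<close> lies on the geodesic.\<close>
definition coshsq_dist :: "real^4 \<Rightarrow> (real^4) \<times> (real^4) \<Rightarrow> real" where
  "coshsq_dist o' l = -2 * mink o' (fst l) * mink o' (snd l) / mink (fst l) (snd l)"

definition perp_component :: "real^4 \<Rightarrow> (real^4) \<times> (real^4) \<Rightarrow> real^4" where
  "perp_component o' l = o' - inverse (mink (fst l) (snd l)) *\<^sub>R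
     (mink o' (snd l) *\<^sub>R fst l + mink o' (fst l) *\<^sub>R snd l)"

lemma coshsq_dist_endpoints_general:
  assumes "p$0 + v$0 \<noteq> 0" "p$0 - v$0 \<noteq> 0"
  shows "coshsq_dist o' (endpoints (p,v)) =
    -2 * (mink o' p ^ 2 - mink o' v ^ 2) / (mink p p - mink v v)"
proof -
  define a b where "a = inverse (p$0 + v$0)" and "b = inverse (p$0 - v$0)"
  have "a \<noteq> 0" "b \<noteq> 0" using assms by (simp_all add: a_def b_def)
  have "endpoints (p,v) = (a *\<^sub>R (p+v), b *\<^sub>R (p-v))" by (simp add: endpoints_def a_def b_def)
  then have "coshsq_dist o' (endpoints (p,v)) =
      -2 * (a * b * (mink o' p ^ 2 - mink o' v ^ 2)) / (a * b * (mink p p - mink v v))"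
    unfolding coshsq_dist_def
    by (simp add: mink_simps mink_commute[of v p] power2_eq_square algebra_simps)
  also have "\<dots> = -2 * (mink o' p ^ 2 - mink o' v ^ 2) / (mink p p - mink v v)"
    using \<open>a \<noteq> 0\<close> \<open>b \<noteq> 0\<close> by (cases "mink p p - mink v v = 0") (simp_all add: field_simps)
  finally show ?thesis .
qed

lemma coshsq_dist_endpoints:
  assumes "unit_tangent p v"
  shows "coshsq_dist o' (endpoints (p,v)) = mink o' p ^ 2 - mink o' v ^ 2"
  using coshsq_dist_endpoints_general[of p v o'] unit_tangent_time_pos[OF assms]
    unit_tangentD[OF assms] by (simp add: field_simps)

lemma perp_component_endpoints_general:
  assumes "p$0 + v$0 \<noteq> 0" "p$0 - v$0 \<noteq> 0"
  shows "perp_component o' (endpoints (p,v)) =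
    o' - inverse (mink p p - mink v v) *\<^sub>R ((2 * mink o' p) *\<^sub>R p - (2 * mink o' v) *\<^sub>R v)"
proof -
  define a b where "a = inverse (p$0 + v$0)" and "b = inverse (p$0 - v$0)"
  have ab: "a * b \<noteq> 0" using assms by (simp add: a_def b_def)
  have e: "endpoints (p,v) = (a *\<^sub>R (p+v), b *\<^sub>R (p-v))" by (simp add: endpoints_def a_def b_def)
  have m: "mink (a *\<^sub>R (p+v)) (b *\<^sub>R (p-v)) = (a*b) * (mink p p - mink v v)"
    by (simp add: mink_simps mink_commute[of v p] algebra_simps)
  have w: "mink o' (b *\<^sub>R (p-v)) *\<^sub>R (a *\<^sub>R (p+v)) + mink o' (a *\<^sub>R (p+v)) *\<^sub>R (b *\<^sub>R (p-v))
      = (a*b) *\<^sub>R ((2 * mink o' p) *\<^sub>R p - (2 * mink o' v) *\<^sub>R v)"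
    by (simp add: mink_simps vec_eq_iff algebra_simps)
  have c: "inverse ((a*b) * Q) *\<^sub>R ((a*b) *\<^sub>R W) = inverse Q *\<^sub>R W" for Q and W :: "real^4"
    using ab by (cases "Q = 0") (simp_all add: field_simps)
  show ?thesis unfolding e perp_component_def fst_conv snd_conv m w c ..
qed

lemma perp_component_props:
  assumes o: "o' \<in> hyp" and l: "l \<in> endpoint_pairs"
  shows "mink (perp_component o' l) (perp_component o' l) = coshsq_dist o' l - 1"
    and "mink (perp_component o' l) (fst l + snd l) = 0"
    and "mink (fst l + snd l) (fst l + snd l) < 0"
proof -
  obtain x y where z: "l = (x,y)" by force
  have h: "mink x x = 0" "mink y y = 0" "mink x y < 0" using l z by (auto simp: endpoint_pairs_def)
  have oo: "mink o' o' = -1" using o by (simp add: hyp_def)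
  show "mink (fst l + snd l) (fst l + snd l) < 0"
    using h z by (simp add: mink_simps mink_commute[of y x])
  show "mink (perp_component o' l) (fst l + snd l) = 0"
    using h z by (simp add: perp_component_def mink_simps mink_commute[of y x] field_simps)
  show "mink (perp_component o' l) (perp_component o' l) = coshsq_dist o' l - 1"
    using h z oo
    by (simp add: perp_component_def coshsq_dist_def mink_simps mink_commute[of y x]
        mink_commute[of x o'] mink_commute[of y o'] field_simps power2_eq_square)
qed

lemma coshsq_dist_ge_1:
  assumes "o' \<in> hyp" "l \<in> endpoint_pairs"
  shows "coshsq_dist o' l \<ge> 1"
  using perp_component_props[OF assms] mink_orthogonal_timelike_nonneg by fastforce

lemma coshsq_dist_eq_1_iff:
  assumes "o' \<in> hyp" "l \<in> endpoint_pairs"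
  shows "coshsq_dist o' l = 1 \<longleftrightarrow> perp_component o' l = 0"
  using perp_component_props[OF assms] mink_orthogonal_timelike_eq_0 by fastforce

text \<open>\<open>- mink o' (geod p v t)\<close> is \<open>cosh\<close> of the distance from \<open>o'\<close> to the point \<open>geod p v t\<close>.\<close>
lemma coshsq_dist_le_geod:
  assumes u: "unit_tangent p v"
  shows "coshsq_dist o' (endpoints (p,v)) \<le> (mink o' (geod p v t))^2"
proof -
  define a b where "a = mink o' p" and "b = mink o' v"
  have "mink o' (geod p v t) = a * cosh t + b * sinh t"
    by (simp add: geod_def mink_simps a_def b_def)
  moreover have "(a * cosh t + b * sinh t)^2 - (a^2 - b^2) - (a * sinh t + b * cosh t)^2
      = (a^2 - b^2) * (cosh t ^ 2 - sinh t ^ 2 - 1)"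
    by (simp add: power2_eq_square algebra_simps)
  ultimately have "(mink o' (geod p v t))^2 - (mink o' p ^ 2 - mink o' v ^ 2)
      = (mink o' p * sinh t + mink o' v * cosh t)^2"
    using cosh_square_eq[of t] by (simp add: a_def b_def)
  then show ?thesis using coshsq_dist_endpoints[OF u] by (smt (verit) zero_le_power2)
qed

lemma arcosh_le_iff_real:
  fixes x y :: real
  assumes "1 \<le> x" "1 \<le> y"
  shows "arcosh x \<le> arcosh y \<longleftrightarrow> x \<le> y"
  using arcosh_less_iff_real[OF assms(2,1)] by (simp add: not_less[symmetric])

lemma Dfun_eq:
  assumes o: "o' \<in> hyp" and l: "l \<in> Lspace"
  shows "Dfun o' l = arcosh (sqrt (coshsq_dist o' l)) ^ 2"
proof -
  obtain p v where u: "unit_tangent p v" and e: "endpoints (p,v) = l" and v0: "mink o' v = 0"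
    using exists_foot_frame[OF l o] by blast
  define a where "a = - mink o' p"
  have "a > 0" using normal_component(4)[OF u o] by (simp add: a_def)
  have F: "coshsq_dist o' l = a^2" using coshsq_dist_endpoints[OF u, of o'] e v0 by (simp add: a_def)
  then have "1^2 \<le> a^2" using coshsq_dist_ge_1[OF o, of l] l Lspace_eq_endpoint_pairs by simp
  then have "1 \<le> a" using \<open>a > 0\<close> by (rule power2_le_imp_le[OF _ less_imp_le])
  define S :: "((real^4) \<times> (real^4) \<times> real) set"
    where "S = {(p, v, t). unit_tangent p v \<and> endpoints (p, v) = l}"
  define f where "f = (\<lambda>z. hdist o' (geod (fst z) (fst (snd z)) (snd (snd z))))"
  have "arcosh a \<le> f z" if zS: "z \<in> S" for z
  proof -
    obtain p' v' t where z: "z = (p',v',t)" and u': "unit_tangent p' v'" and e': "endpoints (p',v') = l"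
      using zS unfolding S_def by (cases z) auto
    have "geod p' v' t \<in> hyp"
      using unit_tangent_boost[OF u', of t] by (simp add: boost_def geod_def unit_tangent_def)
    then have pos: "- mink o' (geod p' v' t) > 0"
      using mink_hyp_future_neg[OF o] by (simp add: hyp_def)
    have "a^2 \<le> (- mink o' (geod p' v' t))^2"
      using coshsq_dist_le_geod[OF u', of o' t] e' F by simp
    from power2_le_imp_le[OF this less_imp_le[OF pos]]
    have "a \<le> - mink o' (geod p' v' t)" .
    then show ?thesis using \<open>1 \<le> a\<close> by (simp add: z f_def hdist_def arcosh_le_iff_real)
  qed
  moreover have "(p,v,0) \<in> S" "f (p,v,0) = arcosh a"
    using u e by (simp_all add: S_def f_def hdist_def geod_def a_def)
  ultimately have "Inf (f ` S) = arcosh a"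
    by (intro cInf_eq_minimum) (force intro: image_eqI[where x="(p,v,0)"])+
  then show ?thesis using F \<open>a > 0\<close> by (simp add: Dfun_def S_def f_def)
qed

lemma Dfun_pos:
  assumes "o' \<in> hyp" "l \<in> Lspace" "perp_component o' l \<noteq> 0"
  shows "Dfun o' l > 0"
proof -
  have "l \<in> endpoint_pairs" using assms(2) Lspace_eq_endpoint_pairs by simp
  then have "coshsq_dist o' l > 1"
    using coshsq_dist_ge_1 coshsq_dist_eq_1_iff assms by fastforce
  then show ?thesis using Dfun_eq[OF assms(1,2)] by simp
qed

lemma Dfun_eq_0_imp_coshsq_dist_eq_1:
  assumes "o' \<in> hyp" "l \<in> Lspace" "Dfun o' l = 0"
  shows "coshsq_dist o' l = 1"
proof -
  have "l \<in> endpoint_pairs" using assms(2) Lspace_eq_endpoint_pairs by simp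
  then have "coshsq_dist o' l \<ge> 1" using coshsq_dist_ge_1 assms(1) by blast
  moreover have "arcosh (sqrt (coshsq_dist o' l)) = 0" using Dfun_eq[OF assms(1,2)] assms(3) by simp
  ultimately show ?thesis by simp
qed

section \<open>Derivatives along Jacobi fields\<close>

text \<open>The derivative of a function on \<open>L\<close> in the direction \<open>dE (p,v) (A,B)\<close> can be computed along
  the (non-unit) frames \<open>(p + s A, v + s B)\<close>, where closed formulas in terms of \<open>(p, v)\<close> hold.\<close>
lemma jacobi_derivative_eq:
  assumes u: "unit_tangent p v" and F: "(F has_derivative F') (at (endpoints (p,v)))"
    and H: "\<And>s. (p + s *\<^sub>R A)$0 + (v + s *\<^sub>R B)$0 \<noteq> 0 \<Longrightarrow> (p + s *\<^sub>R A)$0 - (v + s *\<^sub>R B)$0 \<noteq> 0 \<Longrightarrow>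
      F (endpoints (p + s *\<^sub>R A, v + s *\<^sub>R B)) = h s"
    and h: "(h has_vector_derivative W) (at 0)"
  shows "F' (dE (p,v) (A,B)) = W"
proof -
  define Z where "Z = {s::real. (p + s *\<^sub>R A)$0 + (v + s *\<^sub>R B)$0 \<noteq> 0} \<inter>
                      {s. (p + s *\<^sub>R A)$0 - (v + s *\<^sub>R B)$0 \<noteq> 0}"
  have Z: "open Z" unfolding Z_def by (intro open_Int open_Collect_neq continuous_intros)
  have Z0: "0 \<in> Z" using unit_tangent_time_pos[OF u] by (auto simp: Z_def)
  have "((\<lambda>s. F (endpoints (p + s *\<^sub>R A, v + s *\<^sub>R B))) has_vector_derivative F' (dE (p,v) (A,B))) (at 0)"
  proof -
    have "((\<lambda>s. endpoints (p + s *\<^sub>R A, v + s *\<^sub>R B)) has_vector_derivative dE (p,v) (A,B)) (at 0)"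
      using has_vector_derivative_compose_at[OF has_vector_derivative_line]
        unit_tangent_has_derivative_endpoints[OF u] by simp
    from has_vector_derivative_compose_at[OF this] show ?thesis using F by simp
  qed
  then have "(h has_vector_derivative F' (dE (p,v) (A,B))) (at 0)"
    by (rule has_vector_derivative_transform_within_open[OF _ Z Z0]) (simp add: H Z_def)
  from vector_derivative_unique_at[OF this h] show ?thesis .
qed

lemma differentiable_coshsq_dist:
  "mink (fst l) (snd l) \<noteq> 0 \<Longrightarrow> coshsq_dist o' differentiable (at l)"
  unfolding differentiable_def coshsq_dist_def[abs_def]
  by (intro exI) (rule derivative_intros | simp)+

lemma differentiable_perp_component:
  "mink (fst l) (snd l) \<noteq> 0 \<Longrightarrow> perp_component o' differentiable (at l)"
  unfolding differentiable_def perp_component_def[abs_def]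
  by (intro exI) (rule derivative_intros | simp)+

lemma coshsq_dist_jacobi:
  assumes u: "unit_tangent p v" and A: "normal_vec p v A" and B: "normal_vec p v B"
    and F: "(coshsq_dist o' has_derivative F') (at (endpoints (p,v)))"
  shows "F' (dE (p,v) (A,B)) = 2 * (mink o' p * mink o' A - mink o' v * mink o' B)"
proof (rule jacobi_derivative_eq[OF u F])
  define \<delta> where "\<delta> = mink A A - mink B B"
  show "coshsq_dist o' (endpoints (p + s *\<^sub>R A, v + s *\<^sub>R B)) =
      -2 * ((mink o' p + s * mink o' A)^2 - (mink o' v + s * mink o' B)^2) / (-2 + s^2 * \<delta>)"
    if "(p + s *\<^sub>R A)$0 + (v + s *\<^sub>R B)$0 \<noteq> 0" "(p + s *\<^sub>R A)$0 - (v + s *\<^sub>R B)$0 \<noteq> 0" for s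
    using coshsq_dist_endpoints_general[OF that, of o'] unit_tangentD[OF u] A B
    by (simp add: normal_vec_def \<delta>_def mink_simps mink_commute[of p A] mink_commute[of v B]
        power2_eq_square algebra_simps)
  show "((\<lambda>s. -2 * ((mink o' p + s * mink o' A)^2 - (mink o' v + s * mink o' B)^2) / (-2 + s^2 * \<delta>))
      has_vector_derivative 2 * (mink o' p * mink o' A - mink o' v * mink o' B)) (at 0)"
    unfolding has_real_derivative_iff_has_vector_derivative[symmetric]
    by (rule derivative_eq_intros refl | simp)+
qed

lemma perp_component_jacobi:
  assumes u: "unit_tangent p v" and A: "normal_vec p v A" and B: "normal_vec p v B"
    and X: "(perp_component o' has_derivative X') (at (endpoints (p,v)))"
  shows "X' (dE (p,v) (A,B)) =
    mink o' A *\<^sub>R p + mink o' p *\<^sub>R A - mink o' B *\<^sub>R v - mink o' v *\<^sub>R B"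
proof (rule jacobi_derivative_eq[OF u X])
  define \<delta> where "\<delta> = mink A A - mink B B"
  show "perp_component o' (endpoints (p + s *\<^sub>R A, v + s *\<^sub>R B)) =
      o' - inverse (-2 + s^2 * \<delta>) *\<^sub>R ((2 * (mink o' p + s * mink o' A)) *\<^sub>R (p + s *\<^sub>R A)
                                     - (2 * (mink o' v + s * mink o' B)) *\<^sub>R (v + s *\<^sub>R B))"
    if "(p + s *\<^sub>R A)$0 + (v + s *\<^sub>R B)$0 \<noteq> 0" "(p + s *\<^sub>R A)$0 - (v + s *\<^sub>R B)$0 \<noteq> 0" for s
  proof -
    have "mink (p + s *\<^sub>R A) (p + s *\<^sub>R A) - mink (v + s *\<^sub>R B) (v + s *\<^sub>R B) = -2 + s^2 * \<delta>"
      using unit_tangentD[OF u] A B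
      by (simp add: normal_vec_def \<delta>_def mink_simps mink_commute[of p A] mink_commute[of v B]
          power2_eq_square algebra_simps)
    then show ?thesis using perp_component_endpoints_general[OF that, of o'] by (simp add: mink_simps)
  qed
  show "((\<lambda>s. o' - inverse (-2 + s^2 * \<delta>) *\<^sub>R ((2 * (mink o' p + s * mink o' A)) *\<^sub>R (p + s *\<^sub>R A)
                                     - (2 * (mink o' v + s * mink o' B)) *\<^sub>R (v + s *\<^sub>R B)))
      has_vector_derivative mink o' A *\<^sub>R p + mink o' p *\<^sub>R A - mink o' B *\<^sub>R v - mink o' v *\<^sub>R B) (at 0)"
    by (rule derivative_eq_intros refl | simp)+ (simp add: algebra_simps)
qed

section \<open>Critical points of the distance function\<close>

lemma critical_on_comp_derivative:
  assumes crit: "critical_on M f x" and w: "w \<in> tangent_space M x"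
    and fgk: "\<And>y. y \<in> M \<Longrightarrow> f y = g (k y)"
    and k: "(k has_derivative k') (at x)" and g: "(g has_real_derivative g') (at (k x))" and "g' \<noteq> 0"
  shows "k' w = 0"
proof -
  obtain c where cM: "\<forall>t. c t \<in> M" and c0: "c 0 = x" and cw: "(c has_vector_derivative w) (at 0)"
    using w unfolding tangent_space_def by blast
  have "((\<lambda>t. k (c t)) has_real_derivative k' w) (at 0)"
    using has_vector_derivative_compose_at[OF cw] k c0
    by (simp add: has_real_derivative_iff_has_vector_derivative)
  moreover have "(g has_real_derivative g') (at ((\<lambda>t. k (c t)) 0))" using g c0 by simp
  ultimately have "((g \<circ> (\<lambda>t. k (c t))) has_real_derivative g' * k' w) (at 0)"
    by (rule DERIV_chain[rotated])
  moreover have "g \<circ> (\<lambda>t. k (c t)) = f \<circ> c" using cM fgk by auto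
  moreover have "((f \<circ> c) has_real_derivative 0) (at 0)"
    using crit cM c0 cw unfolding critical_on_def by blast
  ultimately have "g' * k' w = 0" using DERIV_unique by metis
  then show ?thesis using \<open>g' \<noteq> 0\<close> by simp
qed

lemma arcosh_sqrt_square_has_derivative:
  fixes s :: real
  assumes "s > 1"
  shows "((\<lambda>s. arcosh (sqrt s) ^ 2) has_real_derivative
           arcosh (sqrt s) / (sqrt (s - 1) * sqrt s)) (at s)"
proof -
  have "((\<lambda>s. arcosh (sqrt s)) has_real_derivative
          1 / sqrt ((sqrt s)^2 - 1) * (inverse (sqrt s) / 2)) (at s)"
    using DERIV_chain[OF arcosh_real_has_field_derivative[of "sqrt s" UNIV] DERIV_real_sqrt[of s]] assms
    by (simp add: o_def)
  from DERIV_power[OF this, of 2] show ?thesis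
    using assms by (simp add: field_simps)
qed

text \<open>At a critical point off the geodesic, move the geodesic in the direction of the normal \<open>N\<close>
  towards \<open>o'\<close>: by part (a) this is tangent to \<open>M\<close>, and it decreases the distance to first order.\<close>
lemma critical_Dfun_eq_0:
  assumes S: "surface2 M" and sub: "M \<subseteq> Lspace" and as: "almost_semidefinite M"
    and o: "o' \<in> hyp" and crit: "critical_on M (Dfun o') l"
  shows "Dfun o' l = 0"
proof (rule ccontr)
  assume D: "Dfun o' l \<noteq> 0"
  have lM: "l \<in> M" using crit by (simp add: critical_on_def)
  then have lL: "l \<in> Lspace" and le: "l \<in> endpoint_pairs"
    using sub Lspace_eq_endpoint_pairs by auto
  obtain p v where u: "unit_tangent p v" and e: "endpoints (p,v) = l" and v0: "mink o' v = 0"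
    using exists_foot_frame[OF lL o] by blast
  define a N where "a = - mink o' p" and "N = o' + mink o' p *\<^sub>R p - mink o' v *\<^sub>R v"
  note nc = normal_component[OF u o, folded N_def]
  have "a > 0" using nc(4) by (simp add: a_def)
  have F: "coshsq_dist o' l = a^2"
    using coshsq_dist_endpoints[OF u, of o'] e v0 by (simp add: a_def)
  have "coshsq_dist o' l > 1"
    using coshsq_dist_ge_1[OF o le] D Dfun_eq[OF o lL] by (cases "coshsq_dist o' l = 1") auto
  obtain B where "normal_vec p v B" and w: "dE (p,v) (N,B) \<in> tangent_space M l"
    using tangent_projects_onto_normals[OF S sub as u _ nc(1)] lM e by metis
  obtain F' where dF: "(coshsq_dist o' has_derivative F') (at l)"
    using differentiable_coshsq_dist endpoint_pairs_mink_neg[OF le]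
    by (metis differentiable_def less_irrefl)
  have "F' (dE (p,v) (N,B)) = 0"
    using critical_on_comp_derivative[OF crit w Dfun_eq[OF o] dF
        arcosh_sqrt_square_has_derivative[OF \<open>coshsq_dist o' l > 1\<close>]] sub
      \<open>coshsq_dist o' l > 1\<close> by auto
  moreover have "F' (dE (p,v) (N,B)) = 2 * (- a) * (a^2 - 1)"
    using coshsq_dist_jacobi[OF u nc(1) \<open>normal_vec p v B\<close> dF[folded e]] v0 o
    by (simp add: a_def N_def hyp_def mink_simps mink_commute[of p o'] power2_eq_square algebra_simps)
  ultimately show False using \<open>a > 0\<close> \<open>coshsq_dist o' l > 1\<close> F by simp
qed

lemma foot_frame_at_point:
  assumes o: "o' \<in> hyp" and u: "unit_tangent p v" and v0: "mink o' v = 0"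
    and F: "coshsq_dist o' (endpoints (p,v)) = 1"
  shows "p = o'"
proof -
  define N where "N = o' + mink o' p *\<^sub>R p - mink o' v *\<^sub>R v"
  note nc = normal_component[OF u o, folded N_def]
  have "mink N N = 0" using nc(2) coshsq_dist_endpoints[OF u, of o'] F v0 by simp
  then have "N = 0"
    using mink_orthogonal_timelike_eq_0[of p N] unit_tangentD[OF u] nc(1) by (simp add: normal_vec_def)
  moreover have "mink o' p = -1"
    using coshsq_dist_endpoints[OF u, of o'] F v0 nc(4) by (simp add: power2_eq_1_iff)
  ultimately show ?thesis using v0 by (simp add: N_def)
qed

lemma has_derivative_inj_imp_locally_neq:
  fixes f :: "'a::real_normed_vector \<Rightarrow> 'b::euclidean_space"
  assumes d: "(f has_derivative f') (at a)" and "inj f'"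
  obtains r where "r > 0" "\<And>y. dist y a < r \<Longrightarrow> y \<noteq> a \<Longrightarrow> f y \<noteq> f a"
proof -
  obtain m where m: "m > 0" "\<And>x. m * norm x \<le> norm (f' x)"
    using linear_inj_bounded_below_pos[OF has_derivative_linear[OF d] \<open>inj f'\<close>] by blast
  obtain r where r: "r > 0"
    "\<And>y. norm (y - a) < r \<Longrightarrow> norm (f y - f a - f' (y - a)) \<le> (m/2) * norm (y - a)"
    using d[unfolded has_derivative_at_alt] m(1) by (meson half_gt_zero)
  have "f y \<noteq> f a" if "dist y a < r" "y \<noteq> a" for y
  proof
    assume "f y = f a"
    then have "norm (f' (y - a)) \<le> (m/2) * norm (y - a)" using r(2)[of y] that by (simp add: dist_norm)
    moreover have "m * norm (y - a) \<le> norm (f' (y - a))" by (rule m(2))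
    moreover have "(m/2) * norm (y - a) > 0" using that m(1) by simp
    ultimately show False by linarith
  qed
  with r(1) show ?thesis using that by blast
qed

lemma homeomorphism_neighbourhood_in_ball:
  assumes hom: "homeomorphism V (M \<inter> U) \<phi> \<psi>" and "open U" and "y0 \<in> V" and "r > 0"
  obtains T where "open T" "\<phi> y0 \<in> T" "\<And>l. l \<in> M \<inter> T \<Longrightarrow> \<exists>y \<in> V. dist y y0 < r \<and> \<phi> y = l"
proof -
  have h: "\<forall>x\<in>V. \<psi> (\<phi> x) = x" "\<phi> ` V = M \<inter> U" "\<forall>y\<in>M \<inter> U. \<phi> (\<psi> y) = y"
    "\<psi> ` (M \<inter> U) = V" "continuous_on (M \<inter> U) \<psi>"
    using hom by (simp_all add: homeomorphism_def)
  obtain T where T: "open T" "T \<inter> (M \<inter> U) = \<psi> -` ball y0 r \<inter> (M \<inter> U)"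
    using h(5)[unfolded continuous_on_open_invariant, rule_format, OF open_ball[of y0 r]] by blast
  show ?thesis
  proof (rule that[of "T \<inter> U"])
    show "open (T \<inter> U)" using T(1) \<open>open U\<close> by blast
    have "\<phi> y0 \<in> M \<inter> U" "\<psi> (\<phi> y0) = y0" using h(1,2) \<open>y0 \<in> V\<close> by auto
    then show "\<phi> y0 \<in> T \<inter> U" using T(2) \<open>r > 0\<close> by auto
    show "\<exists>y\<in>V. dist y y0 < r \<and> \<phi> y = l" if "l \<in> M \<inter> (T \<inter> U)" for l
      using that T(2) h(3,4) by (intro bexI[of _ "\<psi> l"]) (auto simp: dist_commute)
  qed
qed

text \<open>At a base point \<open>o'\<close> the differential of \<open>perp_component o'\<close> maps the Jacobi data
  \<open>(A, B)\<close> to \<open>-A\<close>.\<close>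
lemma perp_component_chart_derivative_inj:
  assumes as: "almost_semidefinite M" and sub: "M \<subseteq> Lspace" and u: "unit_tangent o' v"
    and lM: "endpoints (o',v) \<in> M" and "linear \<phi>'" "inj \<phi>'"
    and tg: "\<And>e. \<phi>' e \<in> tangent_space M (endpoints (o',v))"
    and dX: "(perp_component o' has_derivative X') (at (endpoints (o',v)))"
  shows "inj (\<lambda>h. X' (\<phi>' h))"
proof -
  have "h = 0" if h: "X' (\<phi>' h) = 0" for h
  proof -
    obtain A B where AB: "normal_vec o' v A" "normal_vec o' v B" "\<phi>' h = dE (o',v) (A,B)"
      using tangent_space_lift[OF sub u tg] by blast
    have "X' (dE (o',v) (A,B)) = - A"
      using perp_component_jacobi[OF u AB(1,2) dX] unit_tangentD[OF u] AB(1,2)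
      by (simp add: normal_vec_def mink_commute[of o' A] mink_commute[of o' B])
    then have "\<phi>' h = dE (o',v) (0,B)" using h AB(3) by simp
    from chart_vertical_eq_0[OF as u lM \<open>linear \<phi>'\<close> \<open>inj \<phi>'\<close> tg AB(2) this] show "h = 0" .
  qed
  then show ?thesis
    using linear_compose[OF \<open>linear \<phi>'\<close> has_derivative_linear[OF dX]]
    by (simp add: linear_injective_0 o_def)
qed

text \<open>At a critical point \<open>o'\<close> lies on the geodesic, so \<open>perp_component o'\<close> vanishes there; by the
  previous lemma it vanishes nowhere else on \<open>M\<close> nearby.\<close>
lemma critical_Dfun_strict_local_min:
  assumes S: "surface2 M" and sub: "M \<subseteq> Lspace" and as: "almost_semidefinite M"
    and o: "o' \<in> hyp" and crit: "critical_on M (Dfun o') l"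
  obtains U where "open U" "l \<in> U" "\<And>l'. l' \<in> M \<inter> U \<Longrightarrow> l' \<noteq> l \<Longrightarrow> Dfun o' l < Dfun o' l'"
proof -
  have D0: "Dfun o' l = 0" by (rule critical_Dfun_eq_0[OF assms])
  have lM: "l \<in> M" using crit by (simp add: critical_on_def)
  then have lL: "l \<in> Lspace" and le: "l \<in> endpoint_pairs"
    using sub Lspace_eq_endpoint_pairs by auto
  have F1: "coshsq_dist o' l = 1" by (rule Dfun_eq_0_imp_coshsq_dist_eq_1[OF o lL D0])
  then have X0: "perp_component o' l = 0" using coshsq_dist_eq_1_iff[OF o le] by simp
  obtain p v where u: "unit_tangent p v" and e: "endpoints (p,v) = l" and v0: "mink o' v = 0"
    using exists_foot_frame[OF lL o] by blast
  have po: "p = o'" using foot_frame_at_point[OF o u v0] F1 e by simp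
  obtain U and V :: "(real^2) set" and \<phi> \<psi> y0 \<phi>' where U: "open U" "l \<in> U" "open V"
    "homeomorphism V (M \<inter> U) \<phi> \<psi>" "y0 \<in> V" "\<phi> y0 = l"
    and d\<phi>: "(\<phi> has_derivative \<phi>') (at y0)" "inj \<phi>'"
    and tg: "\<And>e. \<phi>' e \<in> tangent_space M l"
    by (rule surface2_chart[OF S lM]) blast
  obtain X' where dX: "(perp_component o' has_derivative X') (at l)"
    using differentiable_perp_component endpoint_pairs_mink_neg[OF le]
    by (metis differentiable_def less_irrefl)
  have "inj (\<lambda>h. X' (\<phi>' h))"
    using perp_component_chart_derivative_inj[OF as sub u[unfolded po] _ has_derivative_linear[OF d\<phi>(1)]
        d\<phi>(2)] tg dX lM e po by simp
  moreover have "((\<lambda>y. perp_component o' (\<phi> y)) has_derivative (\<lambda>h. X' (\<phi>' h))) (at y0)"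
    using has_derivative_compose[OF d\<phi>(1)] dX U(6) by simp
  ultimately obtain r where "r > 0"
    and r: "\<And>y. dist y y0 < r \<Longrightarrow> y \<noteq> y0 \<Longrightarrow> perp_component o' (\<phi> y) \<noteq> 0"
    using has_derivative_inj_imp_locally_neq X0 U(6) by metis
  obtain T where T: "open T" "l \<in> T"
    and TM: "\<And>l'. l' \<in> M \<inter> T \<Longrightarrow> \<exists>y \<in> V. dist y y0 < r \<and> \<phi> y = l'"
    using homeomorphism_neighbourhood_in_ball[OF U(4,1,5) \<open>r > 0\<close>] U(6) by metis
  show ?thesis
  proof (rule that[OF T])
    fix l' assume l': "l' \<in> M \<inter> T" "l' \<noteq> l"
    then obtain y where "dist y y0 < r" "\<phi> y = l'" using TM by blast
    then have "perp_component o' l' \<noteq> 0" using r l'(2) U(6) by blast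
    then show "Dfun o' l < Dfun o' l'" using Dfun_pos[OF o, of l'] l' sub D0 by auto
  qed
qed

section \<open>Properness of the distance function\<close>

lemma norm_null_normalized_le:
  assumes "mink x x = 0" "x$0 = 1"
  shows "norm x \<le> 4"
proof -
  have "x$1^2 + x$2^2 + x$3^2 = 1" using assms by (simp add: mink_expand power2_eq_square)
  then have "x$1^2 \<le> 1" "x$2^2 \<le> 1" "x$3^2 \<le> 1"
    using zero_le_power2[of "x$1"] zero_le_power2[of "x$2"] zero_le_power2[of "x$3"] by linarith+
  then have "\<bar>x$1\<bar> \<le> 1" "\<bar>x$2\<bar> \<le> 1" "\<bar>x$3\<bar> \<le> 1" by (simp_all add: abs_square_le_1)
  moreover have "(4::4) = 0" by simp
  then have "norm x \<le> \<bar>x$0\<bar> + \<bar>x$1\<bar> + \<bar>x$2\<bar> + \<bar>x$3\<bar>"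
    using norm_le_l1_cart[of x] unfolding sum_4 by (simp only:)
  ultimately show ?thesis using assms(2) by simp
qed

lemma compact_coshsq_dist_sublevel:
  assumes o: "o' \<in> hyp"
  shows "compact {l \<in> Lspace. coshsq_dist o' l \<le> C}"
proof (cases "C > 0")
  case False
  then have empty: "{l \<in> Lspace. coshsq_dist o' l \<le> C} = {}"
    using coshsq_dist_ge_1[OF o] Lspace_eq_endpoint_pairs by fastforce
  show ?thesis unfolding empty by simp
next
  case True
  define K where "K = {l::(real^4)\<times>(real^4). mink (fst l) (fst l) = 0 \<and> mink (snd l) (snd l) = 0 \<and>
      fst l $ 0 = 1 \<and> snd l $ 0 = 1 \<and> 2 * mink o' (fst l) * mink o' (snd l) \<le> - C * mink (fst l) (snd l)}"
  have key: "m < 0 \<Longrightarrow> -(P / m) \<le> C \<longleftrightarrow> P \<le> - (C * m)" for P m :: real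
    by (simp add: field_simps) arith
  have "{l \<in> Lspace. coshsq_dist o' l \<le> C} = K"
  proof (intro set_eqI iffI)
    fix l assume "l \<in> {l \<in> Lspace. coshsq_dist o' l \<le> C}"
    then have "l \<in> endpoint_pairs" "-2 * mink o' (fst l) * mink o' (snd l) / mink (fst l) (snd l) \<le> C"
      by (simp_all add: Lspace_eq_endpoint_pairs coshsq_dist_def)
    moreover from this(1) have "mink (fst l) (snd l) < 0" by (rule endpoint_pairs_mink_neg)
    ultimately show "l \<in> K"
      using key by (auto simp: K_def endpoint_pairs_def)
  next
    fix l assume l: "l \<in> K"
    then have "mink o' (fst l) < 0" "mink o' (snd l) < 0"
      using mink_hyp_future_neg[OF o, of "fst l"] mink_hyp_future_neg[OF o, of "snd l"] by (auto simp: K_def)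
    then have "0 < 2 * mink o' (fst l) * mink o' (snd l)" by (simp add: mult_neg_neg)
    then have "- C * mink (fst l) (snd l) > 0" using l by (simp add: K_def)
    then have "mink (fst l) (snd l) < 0" using True by (simp add: mult_less_0_iff)
    with l key show "l \<in> {l \<in> Lspace. coshsq_dist o' l \<le> C}"
      by (cases l) (auto simp: K_def Lspace_eq_endpoint_pairs endpoint_pairs_def coshsq_dist_def)
  qed
  moreover have "bounded K"
  proof -
    have "norm l \<le> 8" if "l \<in> K" for l
      using that norm_null_normalized_le[of "fst l"] norm_null_normalized_le[of "snd l"]
        norm_Pair_le[of "fst l" "snd l"] by (auto simp: K_def)
    then show ?thesis unfolding bounded_iff by blast
  qed
  moreover have "closed K" unfolding K_def
    by (intro closed_Collect_conj closed_Collect_eq closed_Collect_le continuous_intros)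
  ultimately show ?thesis by (simp add: compact_eq_bounded_closed)
qed

lemma compact_Dfun_sublevel:
  assumes o: "o' \<in> hyp"
  shows "compact {l \<in> Lspace. Dfun o' l \<le> Z}"
proof (cases "Z \<ge> 0")
  case True
  have "Dfun o' l \<le> Z \<longleftrightarrow> coshsq_dist o' l \<le> cosh (sqrt Z) ^ 2" if "l \<in> Lspace" for l
  proof -
    have F1: "sqrt (coshsq_dist o' l) \<ge> 1"
      using coshsq_dist_ge_1[OF o] that Lspace_eq_endpoint_pairs by simp
    have "Dfun o' l \<le> Z \<longleftrightarrow> arcosh (sqrt (coshsq_dist o' l)) \<le> sqrt Z"
      using Dfun_eq[OF o that] F1 real_sqrt_le_iff[of "arcosh (sqrt (coshsq_dist o' l)) ^ 2" Z] by simp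
    also have "\<dots> \<longleftrightarrow> sqrt (coshsq_dist o' l) \<le> cosh (sqrt Z)"
      using arcosh_le_iff_real[OF F1 cosh_real_ge_1, of "sqrt Z"] True by (simp add: arcosh_cosh_real)
    also have "\<dots> \<longleftrightarrow> coshsq_dist o' l \<le> cosh (sqrt Z) ^ 2"
      using F1 real_sqrt_le_iff[of "coshsq_dist o' l" "cosh (sqrt Z) ^ 2"] by simp
    finally show ?thesis .
  qed
  then have "{l \<in> Lspace. Dfun o' l \<le> Z} = {l \<in> Lspace. coshsq_dist o' l \<le> cosh (sqrt Z) ^ 2}"
    by blast
  then show ?thesis using compact_coshsq_dist_sublevel[OF o] by simp
next
  case False
  have "Dfun o' l \<ge> 0" for l by (simp add: Dfun_def)
  with False have empty: "{l \<in> Lspace. Dfun o' l \<le> Z} = {}" by (auto dest: order_trans)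
  show ?thesis unfolding empty by simp
qed

text \<open>The part of a sublevel set inside \<open>M\<close> is compact, hence covered by finitely many
  neighbourhoods, each visited only finitely often by the sequence.\<close>
lemma filterlim_at_top_compact_sublevels:
  fixes f :: "'a::topological_space \<Rightarrow> real"
  assumes sub: "\<And>Z. compact {x \<in> L. f x \<le> Z}" and M: "closedin (top_of_set L) M"
    and s: "\<forall>n. s n \<in> M" and nc: "\<forall>x\<in>M. \<exists>U. open U \<and> x \<in> U \<and> finite {n. s n \<in> U}"
  shows "filterlim (\<lambda>n. f (s n)) at_top sequentially"
proof (rule filterlim_at_top_dense[THEN iffD2], intro allI)
  fix Z
  define K where "K = M \<inter> {x \<in> L. f x \<le> Z}"
  obtain C where "closed C" "M = L \<inter> C" using M closedin_closed by blast
  then have "K = C \<inter> {x \<in> L. f x \<le> Z}" by (auto simp: K_def)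
  then have "compact K" using closed_Int_compact[OF \<open>closed C\<close> sub] by simp
  have "\<forall>x\<in>K. \<exists>V. open V \<and> x \<in> V \<and> finite {n. s n \<in> V}" using nc by (simp add: K_def)
  from bchoice[OF this]
  obtain U where U: "\<forall>x\<in>K. open (U x) \<and> x \<in> U x \<and> finite {n. s n \<in> U x}" ..
  then have "\<And>x. x \<in> K \<Longrightarrow> open (U x)" "K \<subseteq> (\<Union>x\<in>K. U x)" by auto
  then obtain D where D: "D \<subseteq> K" "finite D" "K \<subseteq> (\<Union>x\<in>D. U x)"
    by (rule compactE_image[OF \<open>compact K\<close>])
  have "{n. \<not> Z < f (s n)} \<subseteq> (\<Union>x\<in>D. {n. s n \<in> U x})"
  proof
    fix n assume "n \<in> {n. \<not> Z < f (s n)}"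
    then have "s n \<in> K" using s closedin_subset[OF M] by (auto simp: K_def)
    then show "n \<in> (\<Union>x\<in>D. {n. s n \<in> U x})" using D(3) by auto
  qed
  moreover have "finite (\<Union>x\<in>D. {n. s n \<in> U x})"
    using D U by (intro finite_UN_I) auto
  ultimately have "finite {n. \<not> Z < f (s n)}" by (rule finite_subset)
  then show "eventually (\<lambda>n. Z < f (s n)) sequentially"
    by (simp add: cofinite_eq_sequentially[symmetric] eventually_cofinite)
qed

theorem lemma3p3:
  fixes ob :: "real^4" and M :: "((real^4) \<times> (real^4)) set"
  assumes "ob \<in> hyp"
    and "M \<subseteq> Lspace" and "surface2 M"
    and "closedin (top_of_set Lspace) M" and "connected M"
    and "almost_semidefinite M"
  shows "(\<forall>p v. unit_tangent p v \<and> endpoints (p, v) \<in> M \<longrightarrow>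
            (\<forall>w. normal_vec p v w \<longrightarrow>
               (\<exists>B. normal_vec p v B \<and>
                    Tgeo p v w B \<in> tangent_space M (endpoints (p, v)))))
       \<and> (\<forall>l. critical_on M (Dfun ob) l \<longrightarrow>
            Dfun ob l = 0 \<and>
            (\<exists>U. open U \<and> l \<in> U \<and> (\<forall>l'\<in>M \<inter> U. l' \<noteq> l \<longrightarrow> Dfun ob l < Dfun ob l')))
       \<and> (\<forall>s :: nat \<Rightarrow> (real^4) \<times> (real^4). (\<forall>n. s n \<in> M) \<and>
            (\<forall>x\<in>M. \<exists>U. open U \<and> x \<in> U \<and> finite {n. s n \<in> U})
            \<longrightarrow> filterlim (\<lambda>n. Dfun ob (s n)) at_top sequentially)"
proof (intro conjI allI impI)
  fix p v w
  assume "unit_tangent p v \<and> endpoints (p, v) \<in> M" and "normal_vec p v w"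
  then show "\<exists>B. normal_vec p v B \<and> Tgeo p v w B \<in> tangent_space M (endpoints (p, v))"
    using tangent_projects_onto_normals[OF assms(3,2,6)] unfolding Tgeo_def by metis
next
  fix l assume crit: "critical_on M (Dfun ob) l"
  show "Dfun ob l = 0" by (rule critical_Dfun_eq_0[OF assms(3,2,6,1) crit])
  show "\<exists>U. open U \<and> l \<in> U \<and> (\<forall>l'\<in>M \<inter> U. l' \<noteq> l \<longrightarrow> Dfun ob l < Dfun ob l')"
    using critical_Dfun_strict_local_min[OF assms(3,2,6,1) crit] by metis
next
  fix s :: "nat \<Rightarrow> (real^4) \<times> (real^4)"
  assume "(\<forall>n. s n \<in> M) \<and> (\<forall>x\<in>M. \<exists>U. open U \<and> x \<in> U \<and> finite {n. s n \<in> U})"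
  then show "filterlim (\<lambda>n. Dfun ob (s n)) at_top sequentially"
    using filterlim_at_top_compact_sublevels[OF compact_Dfun_sublevel[OF assms(1)] assms(4)] by blast
qed

end
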